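(* Let $j\ge0$ be an integer and $\beta$ a real number, and for $x\in\mathbb R^d$, $t\neq0$, put $r=\|x\|$ and $$H_j^{(\beta)}(x,t)=(t^2-\|x\|^2)\,t^{2j}\,P_j^{(1,\beta)}\!\left(2\frac{r^2}{t^2}-1\right).$$ Then $$\frac{\partial}{\partial t}H_j^{(\beta)}(x,t)=2(j+1)\,t^{2j+1}P_j^{(0,\beta)}\!\left(2\frac{r^2}{t^2}-1\right),$$ $$\frac{\partial^2}{\partial t^2}H_j^{(\beta)}(x,t)=2(j+1)(4j+2\beta+3)\,t^{2j}P_j^{(0,\beta)}\!\left(2\frac{r^2}{t^2}-1\right)-4(j+1)(j+\beta+1)\,t^{2j}P_j^{(1,\beta)}\!\left(2\frac{r^2}{t^2}-1\right).$$
   Context: $P_n^{(\alpha,\beta)}$ denotes the Jacobi polynomial $P_n^{(\alpha,\beta)}(s)=\sum_{k=0}^n \frac{(\alpha+k+1)_{n-k}(n+\alpha+\beta+1)_k}{k!\,(n-k)!}\left(\frac{s-1}{2}\right)^k$, with $(a)_k$ the Pochhammer symbol. *)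

theory Defs
  imports "HOL-Analysis.Analysis"
begin

definition jacobiP :: "nat \<Rightarrow> real \<Rightarrow> real \<Rightarrow> real \<Rightarrow> real" where
  "jacobiP n \<alpha> \<beta> s =
     (\<Sum>k=0..n. pochhammer (\<alpha> + real k + 1) (n - k) * pochhammer (real n + \<alpha> + \<beta> + 1) k
                / (fact k * fact (n - k)) * ((s - 1) / 2) ^ k)"

definition H :: "nat \<Rightarrow> real \<Rightarrow> 'a::euclidean_space \<Rightarrow> real \<Rightarrow> real" where
  "H j \<beta> x t = (t^2 - (norm x)^2) * t^(2*j) * jacobiP j 1 \<beta> (2 * (norm x)^2 / t^2 - 1)"

end

theory Submission
  imports Defs
begin

text \<open>
  Write a = |x|^2 and w = t^2. Since (s - 1)/2 = (a - w)/w for s = 2a/w - 1, the function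
  t^(2n) P_n^(alpha,beta)(2a/t^2 - 1) is the binary form sum_k c_k (a - w)^k w^(n-k) built from the
  coefficients c_k of the Jacobi sum, and H is -(a - w) times such a form. Along the line (a - w, w),
  the w-derivative of a form of degree m with coefficients c_k is the form of degree m - 1 with
  coefficients (m - k) c_k - (k + 1) c_(k+1). Hence both formulas reduce to coefficientwise identities
  between the Jacobi coefficients for alpha = 0 and alpha = 1, which follow from the two-term
  recurrences of Pochhammer symbols.
\<close>

definition binary_form :: "nat \<Rightarrow> (nat \<Rightarrow> real) \<Rightarrow> real \<Rightarrow> real \<Rightarrow> real" where
  "binary_form m c u v = (\<Sum>k\<le>m. c k * u ^ k * v ^ (m - k))"

lemma binary_form_cong:
  "(\<And>k. k \<le> m \<Longrightarrow> c k = d k) \<Longrightarrow> binary_form m c u v = binary_form m d u v"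
  by (simp add: binary_form_def)

lemma binary_form_diff:
  "binary_form m (\<lambda>k. c k - d k) u v = binary_form m c u v - binary_form m d u v"
  by (simp add: binary_form_def sum_subtractf left_diff_distrib)

lemma binary_form_add:
  "binary_form m (\<lambda>k. c k + d k) u v = binary_form m c u v + binary_form m d u v"
  by (simp add: binary_form_def sum.distrib distrib_right)

lemma binary_form_cmult:
  "binary_form m (\<lambda>k. x * c k) u v = x * binary_form m c u v"
  by (simp add: binary_form_def sum_distrib_left mult.assoc)

lemma mult_binary_form_first:
  "u * binary_form m c u v = binary_form (Suc m) (\<lambda>k. case k of 0 \<Rightarrow> 0 | Suc i \<Rightarrow> c i) u v"
  unfolding binary_form_def sum.atMost_Suc_shift
  by (simp add: sum_distrib_left algebra_simps)

lemma has_real_derivative_binary_form: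
  "((\<lambda>w. binary_form m c (a - w) w) has_real_derivative
     (\<Sum>k<m. (real (m - k) * c k - real (Suc k) * c (Suc k)) * (a - w) ^ k * w ^ (m - Suc k))) (at w)"
proof -
  have deriv: "((\<lambda>w. binary_form m c (a - w) w) has_real_derivative
     (\<Sum>k\<le>m. c k * (real (m - k) * (a - w) ^ k * w ^ (m - Suc k)))
       - (\<Sum>k\<le>m. c k * (real k * (a - w) ^ (k - 1) * w ^ (m - k)))) (at w)"
    unfolding binary_form_def sum_subtractf[symmetric]
    by (rule derivative_eq_intros refl | simp)+ (simp add: algebra_simps)
  have lower: "(\<Sum>k\<le>m. c k * (real (m - k) * (a - w) ^ k * w ^ (m - Suc k)))
      = (\<Sum>k<m. real (m - k) * c k * (a - w) ^ k * w ^ (m - Suc k))"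
    by (simp add: lessThan_Suc_atMost[symmetric] mult_ac)
  have upper: "(\<Sum>k\<le>m. c k * (real k * (a - w) ^ (k - 1) * w ^ (m - k)))
      = (\<Sum>k<m. real (Suc k) * c (Suc k) * (a - w) ^ k * w ^ (m - Suc k))"
    by (cases m) (simp_all add: sum.atMost_Suc_shift lessThan_Suc_atMost mult_ac del: sum.atMost_Suc)
  show ?thesis
    using deriv unfolding lower upper by (simp only: left_diff_distrib sum_subtractf)
qed

lemma has_real_derivative_binary_form_square:
  "((\<lambda>s. binary_form (Suc m) c (a - s\<^sup>2) (s\<^sup>2)) has_real_derivative
     2 * s * binary_form m (\<lambda>k. real (Suc m - k) * c k - real (Suc k) * c (Suc k)) (a - s\<^sup>2) (s\<^sup>2))
   (at s)"
proof -
  have "((\<lambda>s. binary_form (Suc m) c (a - s\<^sup>2) (s\<^sup>2)) has_real_derivative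
     (\<Sum>k<Suc m. (real (Suc m - k) * c k - real (Suc k) * c (Suc k)) * (a - s\<^sup>2) ^ k * (s\<^sup>2) ^ (Suc m - Suc k))
       * (2 * s)) (at s)"
    by (rule DERIV_chain2[OF has_real_derivative_binary_form]) (auto intro!: derivative_eq_intros)
  then show ?thesis
    by (simp add: binary_form_def lessThan_Suc_atMost mult_ac)
qed

lemma has_real_derivative_mult_binary_form_square:
  assumes "c (Suc m) = 0"
  shows "((\<lambda>s. s * binary_form m c (a - s\<^sup>2) (s\<^sup>2)) has_real_derivative
     binary_form m (\<lambda>k. c k + 2 * (real (m - k) * c k - real (Suc k) * c (Suc k))) (a - s\<^sup>2) (s\<^sup>2))
   (at s)"
proof -
  define d where "d k = real (m - k) * c k - real (Suc k) * c (Suc k)" for k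
  have "((\<lambda>s. binary_form m c (a - s\<^sup>2) (s\<^sup>2)) has_real_derivative
     (\<Sum>k<m. d k * (a - s\<^sup>2) ^ k * (s\<^sup>2) ^ (m - Suc k)) * (2 * s)) (at s)"
    unfolding d_def
    by (rule DERIV_chain2[OF has_real_derivative_binary_form]) (auto intro!: derivative_eq_intros)
  then have "((\<lambda>s. s * binary_form m c (a - s\<^sup>2) (s\<^sup>2)) has_real_derivative
     binary_form m c (a - s\<^sup>2) (s\<^sup>2)
        + 2 * (s\<^sup>2 * (\<Sum>k<m. d k * (a - s\<^sup>2) ^ k * (s\<^sup>2) ^ (m - Suc k)))) (at s)"
    by (auto intro!: derivative_eq_intros simp: power2_eq_square mult_ac)
  moreover have "s\<^sup>2 * (\<Sum>k<m. d k * (a - s\<^sup>2) ^ k * (s\<^sup>2) ^ (m - Suc k))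
      = binary_form m d (a - s\<^sup>2) (s\<^sup>2)"
  proof -
    have "s\<^sup>2 * (s\<^sup>2) ^ (m - Suc k) = (s\<^sup>2) ^ (m - k)" if "k < m" for k
      using that by (simp add: Suc_diff_Suc flip: power_Suc)
    moreover have "d m = 0"
      using assms by (simp add: d_def)
    ultimately show ?thesis
      unfolding binary_form_def sum_distrib_left
      by (simp flip: lessThan_Suc_atMost) (auto intro!: sum.cong simp: mult.left_commute)
  qed
  ultimately have "((\<lambda>s. s * binary_form m c (a - s\<^sup>2) (s\<^sup>2)) has_real_derivative
     binary_form m (\<lambda>k. c k + 2 * d k) (a - s\<^sup>2) (s\<^sup>2)) (at s)"
    by (simp add: binary_form_add binary_form_cmult)
  then show ?thesis
    by (simp only: d_def)
qed

text \<open>Extended by \<open>0\<close> beyond \<open>n\<close>, so that the recurrences below hold for every \<open>k\<close>.\<close>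

definition jacobi_coeff :: "nat \<Rightarrow> real \<Rightarrow> real \<Rightarrow> nat \<Rightarrow> real" where
  "jacobi_coeff n \<alpha> \<beta> k =
     (if k \<le> n then pochhammer (\<alpha> + real k + 1) (n - k) * pochhammer (real n + \<alpha> + \<beta> + 1) k
                    / (fact k * fact (n - k))
      else 0)"

lemma jacobiP_eq_sum_jacobi_coeff:
  "jacobiP n \<alpha> \<beta> s = (\<Sum>k\<le>n. jacobi_coeff n \<alpha> \<beta> k * ((s - 1) / 2) ^ k)"
  by (simp add: jacobiP_def jacobi_coeff_def atLeast0AtMost)

lemma jacobi_coeff_Suc:
  "real (Suc k) * (\<alpha> + real k + 1) * jacobi_coeff n \<alpha> \<beta> (Suc k)
     = real (n - k) * (real n + \<alpha> + \<beta> + 1 + real k) * jacobi_coeff n \<alpha> \<beta> k"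
proof (cases "k < n")
  case True
  then obtain m where m: "n - k = Suc m" "n - Suc k = m"
    by (metis Suc_diff_Suc)
  have "pochhammer (\<alpha> + real k + 1) (Suc m) = (\<alpha> + real k + 1) * pochhammer (\<alpha> + real (Suc k) + 1) m"
    by (simp add: pochhammer_rec add_ac)
  moreover have "pochhammer (real n + \<alpha> + \<beta> + 1) (Suc k)
      = pochhammer (real n + \<alpha> + \<beta> + 1) k * (real n + \<alpha> + \<beta> + 1 + real k)"
    by (simp add: pochhammer_Suc)
  ultimately show ?thesis
    using True by (simp add: jacobi_coeff_def m of_nat_diff field_simps del: of_nat_Suc)
qed (simp add: jacobi_coeff_def)

lemma jacobi_coeff_Suc_alpha_plus_one:
  "(\<alpha> + real n + 1) * real (Suc k) * jacobi_coeff n \<alpha> \<beta> (Suc k)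
     = (real n + \<alpha> + \<beta> + 1) * real (n - k) * jacobi_coeff n (\<alpha> + 1) \<beta> k"
proof (cases "k < n")
  case True
  then obtain m where m: "n - k = Suc m" "n - Suc k = m"
    by (metis Suc_diff_Suc)
  define x where "x = \<alpha> + real k + 2"
  define y where "y = real n + \<alpha> + \<beta> + 1"
  have c_Suc: "jacobi_coeff n \<alpha> \<beta> (Suc k) = pochhammer x m * (y * pochhammer (y + 1) k) / (fact (Suc k) * fact m)"
    using True by (simp add: jacobi_coeff_def m x_def y_def pochhammer_rec add_ac)
  have c_alpha: "jacobi_coeff n (\<alpha> + 1) \<beta> k
      = pochhammer x m * (\<alpha> + real n + 1) * pochhammer (y + 1) k / (fact k * fact (Suc m))"
  proof -
    have "n = Suc (k + m)"
      using m by arith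
    then have "pochhammer x (Suc m) = pochhammer x m * (\<alpha> + real n + 1)"
      by (simp add: pochhammer_Suc x_def)
    then show ?thesis
      using True by (simp add: jacobi_coeff_def m x_def y_def add_ac)
  qed
  show ?thesis
    unfolding c_Suc c_alpha m(1) y_def[symmetric] by (simp add: field_simps del: of_nat_Suc)
qed (simp add: jacobi_coeff_def)

lemma jacobi_coeff_alpha_plus_one:
  "(\<alpha> + real k + 1) * (real n + \<alpha> + \<beta> + 1) * jacobi_coeff n (\<alpha> + 1) \<beta> k
     = (\<alpha> + real n + 1) * (real n + \<alpha> + \<beta> + 1 + real k) * jacobi_coeff n \<alpha> \<beta> k"
proof (cases "k \<le> n")
  case True
  have shift: "x * pochhammer (x + 1) m = pochhammer x m * (x + real m)" for x :: real and m
    by (metis pochhammer_rec pochhammer_Suc)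
  have "(\<alpha> + real k + 1) * pochhammer (\<alpha> + 1 + real k + 1) (n - k)
      = pochhammer (\<alpha> + real k + 1) (n - k) * (\<alpha> + real n + 1)"
    using shift[of "\<alpha> + real k + 1" "n - k"] True by (simp add: of_nat_diff add_ac)
  moreover have "(real n + \<alpha> + \<beta> + 1) * pochhammer (real n + (\<alpha> + 1) + \<beta> + 1) k
      = pochhammer (real n + \<alpha> + \<beta> + 1) k * (real n + \<alpha> + \<beta> + 1 + real k)"
    using shift[of "real n + \<alpha> + \<beta> + 1" k] by (simp add: add_ac)
  ultimately show ?thesis
    using True by (simp add: jacobi_coeff_def mult_ac)
qed (simp add: jacobi_coeff_def)

lemma jacobi_coeff_alpha_plus_one_0:
  "(\<alpha> + 1) * jacobi_coeff n (\<alpha> + 1) \<beta> 0 = (\<alpha> + real n + 1) * jacobi_coeff n \<alpha> \<beta> 0"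
proof -
  have "(\<alpha> + 1) * pochhammer (\<alpha> + 1 + 1) n = pochhammer (\<alpha> + 1) n * (\<alpha> + 1 + real n)"
    by (metis pochhammer_rec pochhammer_Suc)
  then show ?thesis
    by (simp add: jacobi_coeff_def add_ac)
qed

lemma jacobi_coeff_alpha1_0:
  "jacobi_coeff n 1 \<beta> 0 = real (Suc n) * jacobi_coeff n 0 \<beta> 0"
  using jacobi_coeff_alpha_plus_one_0[of 0 n \<beta>] by (simp add: add_ac)

lemma jacobi_coeff_alpha1_Suc:
  assumes "k < n"
  shows "real (Suc (Suc k)) * jacobi_coeff n 1 \<beta> (Suc k) - real (n - k) * jacobi_coeff n 1 \<beta> k
           = real (Suc n) * jacobi_coeff n 0 \<beta> (Suc k)"
proof -
  have "real (Suc k) * (real (Suc (Suc k)) * jacobi_coeff n 1 \<beta> (Suc k) - real (n - k) * jacobi_coeff n 1 \<beta> k)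
      = real (n - k) * (real n + \<beta> + 1) * jacobi_coeff n 1 \<beta> k"
    using jacobi_coeff_Suc[of k 1 n \<beta>] by (simp add: algebra_simps)
  also have "\<dots> = real (Suc k) * (real (Suc n) * jacobi_coeff n 0 \<beta> (Suc k))"
    using jacobi_coeff_Suc_alpha_plus_one[of 0 n k \<beta>] by (simp add: algebra_simps)
  finally show ?thesis
    by simp
qed

lemma jacobi_coeff_alpha0_Suc:
  "jacobi_coeff n 0 \<beta> k + 2 * (real (n - k) * jacobi_coeff n 0 \<beta> k - real (Suc k) * jacobi_coeff n 0 \<beta> (Suc k))
     = (4 * real n + 2 * \<beta> + 3) * jacobi_coeff n 0 \<beta> k - 2 * (real n + \<beta> + 1) * jacobi_coeff n 1 \<beta> k"
proof (cases "k \<le> n")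
  case True
  have "real (Suc n) * (real (Suc k) * jacobi_coeff n 0 \<beta> (Suc k))
      = (real n + \<beta> + 1) * real (n - k) * jacobi_coeff n 1 \<beta> k"
    using jacobi_coeff_Suc_alpha_plus_one[of 0 n k \<beta>] by (simp add: algebra_simps)
  moreover have "real (Suc k) * (real n + \<beta> + 1) * jacobi_coeff n 1 \<beta> k
      = real (Suc n) * (real n + \<beta> + 1 + real k) * jacobi_coeff n 0 \<beta> k"
    using jacobi_coeff_alpha_plus_one[of 0 k n \<beta>] by (simp add: algebra_simps)
  ultimately have "real (Suc n) * (jacobi_coeff n 0 \<beta> k
        + 2 * (real (n - k) * jacobi_coeff n 0 \<beta> k - real (Suc k) * jacobi_coeff n 0 \<beta> (Suc k)))
     = real (Suc n) * ((4 * real n + 2 * \<beta> + 3) * jacobi_coeff n 0 \<beta> k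
        - 2 * (real n + \<beta> + 1) * jacobi_coeff n 1 \<beta> k)"
    using True by (simp add: of_nat_diff algebra_simps)
  then show ?thesis
    by simp
qed (simp add: jacobi_coeff_def)

lemma jacobiP_scaled_eq_binary_form:
  assumes "t \<noteq> 0"
  shows "t ^ (2 * n) * jacobiP n \<alpha> \<beta> (2 * a / t\<^sup>2 - 1)
           = binary_form n (jacobi_coeff n \<alpha> \<beta>) (a - t\<^sup>2) (t\<^sup>2)"
  unfolding jacobiP_eq_sum_jacobi_coeff binary_form_def sum_distrib_left
proof (rule sum.cong[OF refl])
  fix k assume "k \<in> {..n}"
  then have "2 * n = 2 * k + 2 * (n - k)"
    by simp
  then have "t ^ (2 * n) = (t\<^sup>2) ^ k * (t\<^sup>2) ^ (n - k)"
    by (metis power_add power_mult)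
  moreover have "(2 * a / t\<^sup>2 - 1 - 1) / 2 = (a - t\<^sup>2) / t\<^sup>2"
    using assms by (simp add: field_simps)
  ultimately show "t ^ (2 * n) * (jacobi_coeff n \<alpha> \<beta> k * ((2 * a / t\<^sup>2 - 1 - 1) / 2) ^ k)
      = jacobi_coeff n \<alpha> \<beta> k * (a - t\<^sup>2) ^ k * (t\<^sup>2) ^ (n - k)"
    using assms by (simp only:) (simp add: power_divide field_simps)
qed

lemma H_eq_binary_form:
  assumes "t \<noteq> 0"
  shows "H j \<beta> x t
    = binary_form (Suc j) (\<lambda>k. case k of 0 \<Rightarrow> 0 | Suc i \<Rightarrow> - jacobi_coeff j 1 \<beta> i)
        ((norm x)\<^sup>2 - t\<^sup>2) (t\<^sup>2)"
proof -
  have "H j \<beta> x t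
      = (t\<^sup>2 - (norm x)\<^sup>2) * binary_form j (jacobi_coeff j 1 \<beta>) ((norm x)\<^sup>2 - t\<^sup>2) (t\<^sup>2)"
    using jacobiP_scaled_eq_binary_form[OF assms] by (simp add: H_def mult.assoc)
  also have "\<dots> = ((norm x)\<^sup>2 - t\<^sup>2)
      * binary_form j (\<lambda>k. -1 * jacobi_coeff j 1 \<beta> k) ((norm x)\<^sup>2 - t\<^sup>2) (t\<^sup>2)"
    by (simp only: binary_form_cmult) (simp add: algebra_simps)
  finally show ?thesis
    by (simp add: mult_binary_form_first)
qed

lemma has_real_derivative_H:
  assumes "t \<noteq> 0"
  shows "(H j \<beta> x has_real_derivative
           2 * real (Suc j) * (t * binary_form j (jacobi_coeff j 0 \<beta>) ((norm x)\<^sup>2 - t\<^sup>2) (t\<^sup>2))) (at t)"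
proof -
  define e where "e = (\<lambda>k. case k of 0 \<Rightarrow> 0 | Suc i \<Rightarrow> - jacobi_coeff j 1 \<beta> i)"
  have coeff: "real (Suc j - k) * e k - real (Suc k) * e (Suc k) = real (Suc j) * jacobi_coeff j 0 \<beta> k"
    if "k \<le> j" for k
  proof (cases k)
    case 0
    then show ?thesis
      by (simp add: e_def jacobi_coeff_alpha1_0)
  next
    case (Suc i)
    then show ?thesis
      using jacobi_coeff_alpha1_Suc[of i j \<beta>] that by (simp add: e_def algebra_simps)
  qed
  have "binary_form j (\<lambda>k. real (Suc j - k) * e k - real (Suc k) * e (Suc k)) ((norm x)\<^sup>2 - t\<^sup>2) (t\<^sup>2)
      = real (Suc j) * binary_form j (jacobi_coeff j 0 \<beta>) ((norm x)\<^sup>2 - t\<^sup>2) (t\<^sup>2)"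
    by (subst binary_form_cmult[symmetric]) (rule binary_form_cong[OF coeff])
  moreover have "2 * t * (real (Suc j) * binary_form j (jacobi_coeff j 0 \<beta>) ((norm x)\<^sup>2 - t\<^sup>2) (t\<^sup>2))
      = 2 * real (Suc j) * (t * binary_form j (jacobi_coeff j 0 \<beta>) ((norm x)\<^sup>2 - t\<^sup>2) (t\<^sup>2))"
    by (simp only: mult_ac)
  ultimately have "((\<lambda>s. binary_form (Suc j) e ((norm x)\<^sup>2 - s\<^sup>2) (s\<^sup>2)) has_real_derivative
      2 * real (Suc j) * (t * binary_form j (jacobi_coeff j 0 \<beta>) ((norm x)\<^sup>2 - t\<^sup>2) (t\<^sup>2))) (at t)"
    using has_real_derivative_binary_form_square[of j e "(norm x)\<^sup>2" t] by (simp only:)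
  then show ?thesis
    by (rule has_field_derivative_transform_within_open[where S = "-{0}"])
      (use assms in \<open>auto simp: H_eq_binary_form e_def\<close>)
qed

lemma has_real_derivative_deriv_H:
  assumes "t \<noteq> 0"
  shows "(deriv (H j \<beta> x) has_real_derivative
           2 * real (Suc j) *
             ((4 * real j + 2 * \<beta> + 3) * binary_form j (jacobi_coeff j 0 \<beta>) ((norm x)\<^sup>2 - t\<^sup>2) (t\<^sup>2)
              - 2 * (real j + \<beta> + 1) * binary_form j (jacobi_coeff j 1 \<beta>) ((norm x)\<^sup>2 - t\<^sup>2) (t\<^sup>2))) (at t)"
proof (rule has_field_derivative_transform_within_open)
  show "((\<lambda>s. 2 * real (Suc j) * (s * binary_form j (jacobi_coeff j 0 \<beta>) ((norm x)\<^sup>2 - s\<^sup>2) (s\<^sup>2)))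
      has_real_derivative 2 * real (Suc j) *
             ((4 * real j + 2 * \<beta> + 3) * binary_form j (jacobi_coeff j 0 \<beta>) ((norm x)\<^sup>2 - t\<^sup>2) (t\<^sup>2)
              - 2 * (real j + \<beta> + 1) * binary_form j (jacobi_coeff j 1 \<beta>) ((norm x)\<^sup>2 - t\<^sup>2) (t\<^sup>2))) (at t)"
  proof (rule DERIV_cmult)
    have "((\<lambda>s. s * binary_form j (jacobi_coeff j 0 \<beta>) ((norm x)\<^sup>2 - s\<^sup>2) (s\<^sup>2)) has_real_derivative
        binary_form j (\<lambda>k. jacobi_coeff j 0 \<beta> k
          + 2 * (real (j - k) * jacobi_coeff j 0 \<beta> k - real (Suc k) * jacobi_coeff j 0 \<beta> (Suc k)))
        ((norm x)\<^sup>2 - t\<^sup>2) (t\<^sup>2)) (at t)"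
      by (rule has_real_derivative_mult_binary_form_square) (simp add: jacobi_coeff_def)
    then show "((\<lambda>s. s * binary_form j (jacobi_coeff j 0 \<beta>) ((norm x)\<^sup>2 - s\<^sup>2) (s\<^sup>2)) has_real_derivative
        (4 * real j + 2 * \<beta> + 3) * binary_form j (jacobi_coeff j 0 \<beta>) ((norm x)\<^sup>2 - t\<^sup>2) (t\<^sup>2)
        - 2 * (real j + \<beta> + 1) * binary_form j (jacobi_coeff j 1 \<beta>) ((norm x)\<^sup>2 - t\<^sup>2) (t\<^sup>2)) (at t)"
      by (simp only: jacobi_coeff_alpha0_Suc binary_form_diff binary_form_cmult)
  qed
  show "open (-{0::real})" "t \<in> -{0}"
    using assms by auto
  show "2 * real (Suc j) * (s * binary_form j (jacobi_coeff j 0 \<beta>) ((norm x)\<^sup>2 - s\<^sup>2) (s\<^sup>2))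
      = deriv (H j \<beta> x) s" if "s \<in> -{0}" for s
  proof -
    from that have "s \<noteq> 0"
      by simp
    show ?thesis
      using DERIV_imp_deriv[OF has_real_derivative_H[OF \<open>s \<noteq> 0\<close>, where j = j and \<beta> = \<beta> and x = x]]
      by simp
  qed
qed

theorem lemma2p4:
  fixes j :: nat and \<beta> t :: real and x :: "'a::euclidean_space"
  assumes "t \<noteq> 0"
  shows "((\<lambda>s. H j \<beta> x s) has_real_derivative
            (2 * (real j + 1) * t^(2*j+1) * jacobiP j 0 \<beta> (2 * (norm x)^2 / t^2 - 1))) (at t) \<and>
         (deriv (\<lambda>s. H j \<beta> x s) has_real_derivative
            (2 * (real j + 1) * (4 * real j + 2 * \<beta> + 3) * t^(2*j)
               * jacobiP j 0 \<beta> (2 * (norm x)^2 / t^2 - 1)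
             - 4 * (real j + 1) * (real j + \<beta> + 1) * t^(2*j)
               * jacobiP j 1 \<beta> (2 * (norm x)^2 / t^2 - 1))) (at t)"
proof -
  have form: "binary_form j (jacobi_coeff j \<alpha> \<beta>) ((norm x)\<^sup>2 - t\<^sup>2) (t\<^sup>2)
      = t ^ (2 * j) * jacobiP j \<alpha> \<beta> (2 * (norm x)\<^sup>2 / t\<^sup>2 - 1)" for \<alpha>
    by (rule jacobiP_scaled_eq_binary_form[OF assms, symmetric])
  have "(H j \<beta> x has_real_derivative
      2 * real (Suc j) * (t * (t ^ (2 * j) * jacobiP j 0 \<beta> (2 * (norm x)\<^sup>2 / t\<^sup>2 - 1)))) (at t)"
    using has_real_derivative_H[OF assms, where j = j and \<beta> = \<beta> and x = x] unfolding form .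
  moreover have "(deriv (H j \<beta> x) has_real_derivative
      2 * real (Suc j) *
        ((4 * real j + 2 * \<beta> + 3) * (t ^ (2 * j) * jacobiP j 0 \<beta> (2 * (norm x)\<^sup>2 / t\<^sup>2 - 1))
         - 2 * (real j + \<beta> + 1) * (t ^ (2 * j) * jacobiP j 1 \<beta> (2 * (norm x)\<^sup>2 / t\<^sup>2 - 1)))) (at t)"
    using has_real_derivative_deriv_H[OF assms, where j = j and \<beta> = \<beta> and x = x] unfolding form .
  ultimately show ?thesis
    by (simp add: algebra_simps)
qed

end
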